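(* Let $n>1$ be an odd perfect square. Then $C_{S(n)^*}\le 9$.
   Context: For a natural number $n$, $\mathbb Z_n=\mathbb Z/n\mathbb Z$, $S(n)=\{x^2:x\in\mathbb Z_n\}$, $S(n)^*=S(n)\setminus\{0\}$. For $A\subseteq\mathbb Z_n$, a sequence $(y_1,\dots,y_t)$ ($t\ge1$) in $\mathbb Z_n$ is an $A$-weighted zero-sum sequence if there exist $a_1,\dots,a_t\in A$ with $\sum a_iy_i=0$. $C_A(n)$ is the least positive integer $t$ such that every sequence of length $t$ in $\mathbb Z_n$ has a nonempty subsequence of consecutive terms that is an $A$-weighted zero-sum sequence; $C_{S(n)^*}=C_{S(n)^*}(n)$. *)

theory Defs
  imports Main
begin

text \<open>Z_n is modelled by the residues {0..<n} (naturals) with arithmetic mod n.\<close>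

definition S_star :: "nat \<Rightarrow> nat set" where
  "S_star n = {x ^ 2 mod n | x. x < n} - {0}"

definition weighted_zero_sum :: "nat \<Rightarrow> nat set \<Rightarrow> nat list \<Rightarrow> bool" where
  "weighted_zero_sum n A ys \<longleftrightarrow> ys \<noteq> [] \<and>
     (\<exists>a. (\<forall>i<length ys. a i \<in> A) \<and> (\<Sum>i<length ys. a i * ys ! i) mod n = 0)"

definition consec_property :: "nat \<Rightarrow> nat set \<Rightarrow> nat \<Rightarrow> bool" where
  "consec_property n A t \<longleftrightarrow>
     (\<forall>ys. length ys = t \<and> set ys \<subseteq> {0..<n} \<longrightarrow>
        (\<exists>i j. i < j \<and> j \<le> t \<and> weighted_zero_sum n A (drop i (take j ys))))"

definition C_A :: "nat \<Rightarrow> nat set \<Rightarrow> nat" where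
  "C_A n A = (LEAST t. t > 0 \<and> consec_property n A t)"

end

theory Submission
  imports Defs "HOL-Number_Theory.Number_Theory"
begin

text \<open>Pick a prime \<open>p\<close> with \<open>n = k\<^sup>2 p\<^sup>2\<close>. If \<open>p\<^sup>2\<close> divides \<open>\<Sum> x\<^sub>l\<^sup>2 y\<^sub>l\<close> over a block with all
  \<open>x\<^sub>l\<close> prime to \<open>p\<close>, the weights \<open>(k x\<^sub>l)\<^sup>2\<close> are nonzero squares mod \<open>n\<close> and make the block a
  zero-sum. Such a block exists among any 9 terms. Counting the \<open>(p+1)/2\<close> values of
  \<open>t\<^sup>2 z\<close> shows that for units \<open>z\<^sub>1, z\<^sub>3\<close> some \<open>t\<^sup>2 z\<^sub>1 + z\<^sub>2 + s\<^sup>2 z\<^sub>3\<close> vanishes mod \<open>p\<close>. If at least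
  three terms are prime to \<open>p\<close>, applying this to the first three (the terms between them
  get weight 1) gives a block summing to 0 mod \<open>p\<close> containing a unit, which Hensel-lifts to \<open>p\<^sup>2\<close>.
  Otherwise one of the triples \<open>{0,1,2}, {3,4,5}, {6,7,8}\<close> consists of multiples of \<open>p\<close>,
  and either some term is divisible by \<open>p\<^sup>2\<close> or the same argument applies to the terms
  divided by \<open>p\<close>.\<close>

definition unit_square_zero_sum :: "int \<Rightarrow> int \<Rightarrow> (nat \<Rightarrow> int) \<Rightarrow> nat set \<Rightarrow> bool" where
  "unit_square_zero_sum p q y I \<longleftrightarrow>
     (\<exists>x. (\<forall>l\<in>I. \<not> p dvd x l) \<and> q dvd (\<Sum>l\<in>I. (x l)^2 * y l))"

lemma half_range_square_cong_imp_eq: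
  fixes p z s t :: int
  assumes p: "prime p" and z: "\<not> p dvd z"
    and t: "t \<in> {0..(p-1) div 2}" and s: "s \<in> {0..(p-1) div 2}"
    and cong: "[t^2 * z = s^2 * z] (mod p)"
  shows "t = s"
proof -
  have "p dvd (t - s) * (t + s) * z"
    using cong by (simp add: cong_iff_dvd_diff power2_eq_square algebra_simps)
  then have "p dvd t - s \<or> p dvd t + s"
    using p z by (simp add: prime_dvd_mult_iff)
  moreover have "\<bar>t - s\<bar> < p" "0 \<le> t + s" "t + s < p"
    using t s by auto
  ultimately show ?thesis
    using t s dvd_imp_le_int[of "t - s" p] dvd_imp_le_int[of "t + s" p] by force
qed

lemma prime_square_form_solvable:
  fixes p z1 z2 z3 :: int
  assumes p: "prime p" "p > 2" and z: "\<not> p dvd z1" "\<not> p dvd z3"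
  shows "\<exists>t s. p dvd t^2 * z1 + z2 + s^2 * z3"
proof -
  define T where "T = {0..(p-1) div 2}"
  define f where "f t = (t^2 * z1) mod p" for t
  define g where "g s = (- z2 - s^2 * z3) mod p" for s
  have "inj_on f T"
    using half_range_square_cong_imp_eq[OF p(1) z(1)] by (auto intro!: inj_onI simp: f_def T_def cong_def)
  moreover have "inj_on g T"
  proof (rule inj_onI)
    fix t s assume ts: "t \<in> T" "s \<in> T" "g t = g s"
    then have "[s^2 * z3 = t^2 * z3] (mod p)"
      by (simp add: g_def mod_eq_dvd_iff cong_iff_dvd_diff)
    then show "t = s"
      using half_range_square_cong_imp_eq[OF p(1) z(2)] ts(1,2) unfolding T_def by force
  qed
  ultimately have card_images: "card (f ` T) = nat ((p + 1) div 2)" "card (g ` T) = nat ((p + 1) div 2)"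
    by (simp_all add: card_image T_def)
  have "f ` T \<inter> g ` T \<noteq> {}"
  proof
    assume "f ` T \<inter> g ` T = {}"
    then have "card (f ` T) + card (g ` T) = card (f ` T \<union> g ` T)"
      by (simp add: card_Un_disjoint T_def)
    also have "\<dots> \<le> card {0..<p}"
      using p by (intro card_mono) (auto simp: f_def g_def)
    finally have "2 * nat ((p + 1) div 2) \<le> nat p"
      using card_images by simp
    moreover have "odd p"
      using p prime_odd_int by blast
    ultimately show False
      using p(2) by (auto elim!: oddE)
  qed
  then obtain t s where "f t = g s"
    by auto
  then have "p dvd t^2 * z1 - (- z2 - s^2 * z3)"
    by (simp add: f_def g_def mod_eq_dvd_iff)
  then show ?thesis
    by (auto simp: algebra_simps)
qed

lemma unit_square_zero_sum_lift:
  fixes p :: int and y :: "nat \<Rightarrow> int"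
  assumes p: "prime p" "p > 2" and I: "finite I" "i \<in> I" "\<not> p dvd y i"
    and mod_p: "unit_square_zero_sum p p y I"
  shows "unit_square_zero_sum p (p^2) y I"
proof -
  obtain x s where x: "\<forall>l\<in>I. \<not> p dvd x l" and s: "(\<Sum>l\<in>I. (x l)^2 * y l) = p * s"
    using mod_p unfolding unit_square_zero_sum_def by (auto elim!: dvdE)
  have "\<not> p dvd 2"
    using p zdvd_imp_le[of p 2] by auto
  then have "\<not> p dvd 2 * x i * y i"
    using p(1) x I by (auto simp del: dvd_mult_cancel_left simp add: prime_dvd_mult_iff)
  then have "coprime (2 * x i * y i) p"
    using p(1) prime_imp_coprime coprime_commute by blast
  then obtain u where u: "[2 * x i * y i * u = 1] (mod p)"
    using cong_solve_coprime_int by blast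
  text \<open>Moving \<open>x i\<close> by \<open>p * c\<close> changes the sum by \<open>2 p c x\<^sub>i y\<^sub>i\<close> modulo \<open>p\<^sup>2\<close>, which cancels \<open>p s\<close> for this \<open>c\<close>.\<close>
  define c where "c = - s * u"
  define x' where "x' = x(i := x i + p * c)"
  have "(\<Sum>l\<in>I. (x' l)^2 * y l) = (x' i)^2 * y i + (\<Sum>l\<in>I - {i}. (x' l)^2 * y l)"
    by (rule sum.remove[OF I(1,2)])
  also have "(\<Sum>l\<in>I - {i}. (x' l)^2 * y l) = (\<Sum>l\<in>I - {i}. (x l)^2 * y l)"
    by (rule sum.cong) (simp_all add: x'_def)
  also have "\<dots> = p * s - (x i)^2 * y i"
    using sum.remove[OF I(1,2), of "\<lambda>l. (x l)^2 * y l"] s by simp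
  also have "(x' i)^2 * y i + (p * s - (x i)^2 * y i) = p * (s + 2 * x i * y i * c) + p^2 * (c^2 * y i)"
    by (simp add: x'_def power2_eq_square algebra_simps)
  finally have sum_x': "(\<Sum>l\<in>I. (x' l)^2 * y l) = p * (s + 2 * x i * y i * c) + p^2 * (c^2 * y i)" .
  have "[s + 2 * x i * y i * c = s - s * (2 * x i * y i * u)] (mod p)"
    by (simp add: c_def algebra_simps)
  also have "[s - s * (2 * x i * y i * u) = s - s * 1] (mod p)"
    using u by (intro cong_diff cong_mult cong_refl)
  finally have "p^2 dvd p * (s + 2 * x i * y i * c)"
    by (simp add: cong_0_iff power2_eq_square)
  then have "p^2 dvd (\<Sum>l\<in>I. (x' l)^2 * y l)"
    unfolding sum_x' by simp
  moreover have "\<forall>l\<in>I. \<not> p dvd x' l"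
    using x by (simp add: x'_def dvd_add_left_iff)
  ultimately show ?thesis
    unfolding unit_square_zero_sum_def by blast
qed

lemma unit_square_zero_sum_scale:
  assumes "\<forall>l\<in>I. y l = d * z l" and "unit_square_zero_sum p q z I"
  shows "unit_square_zero_sum p (d * q) y I"
proof -
  obtain x where "\<forall>l\<in>I. \<not> p dvd x l" and "q dvd (\<Sum>l\<in>I. (x l)^2 * z l)"
    using assms(2) unfolding unit_square_zero_sum_def by blast
  moreover have "(\<Sum>l\<in>I. (x l)^2 * y l) = d * (\<Sum>l\<in>I. (x l)^2 * z l)"
    using assms(1) by (simp add: sum_distrib_left algebra_simps)
  ultimately show ?thesis
    unfolding unit_square_zero_sum_def by auto
qed

lemma unit_square_zero_sum_from_subset:
  fixes p :: int
  assumes p: "prime p" and I: "finite I" "C \<subseteq> I" "\<forall>l\<in>I - C. p dvd y l"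
    and x: "\<forall>l\<in>C. \<not> p dvd x l" and sum: "p dvd (\<Sum>l\<in>C. (x l)^2 * y l)"
  shows "unit_square_zero_sum p p y I"
proof -
  define x' where "x' l = (if l \<in> C then x l else 1)" for l
  have "(\<Sum>l\<in>C. (x' l)^2 * y l) = (\<Sum>l\<in>C. (x l)^2 * y l)"
    by (rule sum.cong) (simp_all add: x'_def)
  then have "(\<Sum>l\<in>I. (x' l)^2 * y l) = (\<Sum>l\<in>I - C. (x' l)^2 * y l) + (\<Sum>l\<in>C. (x l)^2 * y l)"
    using sum.subset_diff[OF I(2,1), of "\<lambda>l. (x' l)^2 * y l"] by simp
  moreover have "p dvd (\<Sum>l\<in>I - C. (x' l)^2 * y l)"
    using I(3) by (intro dvd_sum) simp
  ultimately have "p dvd (\<Sum>l\<in>I. (x' l)^2 * y l)"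
    using sum by simp
  moreover have "\<not> p dvd 1"
    using p not_prime_unit by blast
  then have "\<forall>l\<in>I. \<not> p dvd x' l"
    using x by (simp add: x'_def)
  ultimately show ?thesis
    unfolding unit_square_zero_sum_def by blast
qed

lemma unit_square_zero_sum_three_units:
  fixes p :: int and y :: "nat \<Rightarrow> int"
  assumes p: "prime p" "p > 2" and u: "u1 < u2" "u2 < u3"
    and units: "\<not> p dvd y u1" "\<not> p dvd y u2" "\<not> p dvd y u3"
    and no_other_units: "\<forall>l\<in>{u1..u3}. \<not> p dvd y l \<longrightarrow> l \<in> {u1, u2, u3}"
  shows "\<exists>i j. u1 \<le> i \<and> i < j \<and> j \<le> Suc u3 \<and> \<not> p dvd y i \<and> unit_square_zero_sum p p y {i..<j}"
proof -
  obtain t s where ts: "p dvd t^2 * y u1 + y u2 + s^2 * y u3"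
    using prime_square_form_solvable[OF p units(1,3)] by blast
  define x where "x l = (if l = u1 then t else if l = u3 then s else 1)" for l
  have x: "x u1 = t" "x u2 = 1" "x u3 = s"
    using u by (auto simp: x_def)
  have block: "unit_square_zero_sum p p y {i..<j}"
    if "u1 \<le> i" "j \<le> Suc u3" "C \<subseteq> {i..<j}" "{i..<j} \<inter> {u1, u2, u3} \<subseteq> C"
      "\<forall>l\<in>C. \<not> p dvd x l" "p dvd (\<Sum>l\<in>C. (x l)^2 * y l)" for i j C
  proof (rule unit_square_zero_sum_from_subset[OF p(1) _ that(3) _ that(5,6)])
    show "\<forall>l\<in>{i..<j} - C. p dvd y l"
      using that(1,2,4) no_other_units by auto
  qed simp
  have not_unit: "\<not> p dvd 1"
    using p by auto
  consider "p dvd t" | "\<not> p dvd t" "p dvd s" | "\<not> p dvd t" "\<not> p dvd s"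
    by blast
  then show ?thesis
  proof cases
    case 1
    then have "p dvd y u2 + s^2 * y u3"
      using ts by (metis dvd_add_right_iff dvd_mult2 power2_eq_square add.assoc)
    moreover from this have "\<not> p dvd s"
      using units(2) by (metis dvd_add_left_iff dvd_mult2 power2_eq_square)
    ultimately have "unit_square_zero_sum p p y {u2..<Suc u3}"
      using u not_unit by (intro block[of _ _ "{u2, u3}"]) (auto simp: x)
    then show ?thesis
      using u units by (intro exI[of _ u2] exI[of _ "Suc u3"]) auto
  next
    case 2
    then have "p dvd t^2 * y u1 + y u2"
      using ts by (metis dvd_add_left_iff dvd_mult2 power2_eq_square)
    then have "unit_square_zero_sum p p y {u1..<Suc u2}"
      using u 2 not_unit by (intro block[of _ _ "{u1, u2}"]) (auto simp: x)
    then show ?thesis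
      using u units by (intro exI[of _ u1] exI[of _ "Suc u2"]) auto
  next
    case 3
    then have "unit_square_zero_sum p p y {u1..<Suc u3}"
      using u ts not_unit by (intro block[of _ _ "{u1, u2, u3}"]) (auto simp: x add.assoc)
    then show ?thesis
      using u units by (intro exI[of _ u1] exI[of _ "Suc u3"]) auto
  qed
qed

lemma three_smallest_elements:
  fixes U :: "nat set"
  assumes U: "finite U" "3 \<le> card U"
  shows "\<exists>u1 u2 u3. u1 < u2 \<and> u2 < u3 \<and> {u1, u2, u3} \<subseteq> U \<and> (\<forall>l\<in>U. l \<le> u3 \<longrightarrow> l \<in> {u1, u2, u3})"
proof -
  define u1 where "u1 = Min U"
  define u2 where "u2 = Min (U - {u1})"
  define u3 where "u3 = Min (U - {u1, u2})"
  have "U \<noteq> {}"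
    using U by auto
  then have u1: "u1 \<in> U" "\<forall>l\<in>U. u1 \<le> l"
    unfolding u1_def using Min_in[OF U(1)] Min_le[OF U(1)] by blast+
  have fin2: "finite (U - {u1})"
    using U(1) by blast
  have "card (U - {u1}) \<ge> 2"
    using U u1(1) by (simp add: card_Diff_singleton)
  then have "U - {u1} \<noteq> {}"
    by (metis card.empty le_zero_eq zero_neq_numeral)
  then have u2: "u2 \<in> U - {u1}" "\<forall>l\<in>U - {u1}. u2 \<le> l"
    unfolding u2_def using Min_in[OF fin2] Min_le[OF fin2] by blast+
  have fin3: "finite (U - {u1, u2})"
    using U(1) by blast
  have "card (U - {u1, u2}) \<ge> 1"
    using U u1(1) u2(1) by (simp add: card_Diff_insert card_Diff_singleton)
  then have "U - {u1, u2} \<noteq> {}"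
    by (metis card.empty le_zero_eq one_neq_zero)
  then have u3: "u3 \<in> U - {u1, u2}" "\<forall>l\<in>U - {u1, u2}. u3 \<le> l"
    unfolding u3_def using Min_in[OF fin3] Min_le[OF fin3] by blast+
  have "u1 \<le> u2" "u1 \<noteq> u2" "u2 \<le> u3" "u2 \<noteq> u3"
    using u1 u2 u3 by auto
  then have "u1 < u2" "u2 < u3"
    by simp_all
  moreover have "l \<in> {u1, u2, u3}" if "l \<in> U" "l \<le> u3" for l
  proof (rule ccontr)
    assume "l \<notin> {u1, u2, u3}"
    then have "u3 \<le> l"
      using u3(2) that(1) by blast
    then show False
      using \<open>l \<notin> {u1, u2, u3}\<close> that(2) by simp
  qed
  ultimately show ?thesis
    using u1 u2 u3 by blast
qed

lemma three_blocks_of_three: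
  fixes P :: "nat \<Rightarrow> bool"
  assumes "card {l. l < 9 \<and> \<not> P l} < 3"
  shows "\<exists>i\<in>{0, 3, 6}. P i \<and> P (i + 1) \<and> P (i + 2)"
proof (rule ccontr)
  assume "\<not> ?thesis"
  then have "\<forall>i\<in>{0, 3, 6}. \<exists>l\<in>{i..<i + 3}. \<not> P l"
    by (auto simp: numeral_3_eq_3 less_Suc_eq atLeastLessThanSuc)
  then obtain f where f: "\<forall>i\<in>{0, 3, 6::nat}. f i \<in> {i..<i + 3} \<and> \<not> P (f i)"
    by metis
  then have "inj_on f {0, 3, 6}"
    by (auto simp: inj_on_def)
  then have "3 = card (f ` {0, 3, 6})"
    by (simp add: card_image)
  also have "\<dots> \<le> card {l. l < 9 \<and> \<not> P l}"
    using f by (intro card_mono) auto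
  finally show False
    using assms by simp
qed

lemma unit_square_zero_sum_among_nine:
  fixes p :: int and y :: "nat \<Rightarrow> int"
  assumes p: "prime p" "p > 2"
  shows "\<exists>i j. i < j \<and> j \<le> 9 \<and> unit_square_zero_sum p (p^2) y {i..<j}"
proof -
  define U where "U = {l. l < 9 \<and> \<not> p dvd y l}"
  consider (square) l where "l < 9" "p^2 dvd y l"
    | (three_units) "\<forall>l<9. \<not> p^2 dvd y l" "3 \<le> card U"
    | (few_units) "\<forall>l<9. \<not> p^2 dvd y l" "card U < 3"
    by force
  then show ?thesis
  proof cases
    case square
    then have "unit_square_zero_sum p (p^2) y {l..<Suc l}"
      using p by (auto simp: unit_square_zero_sum_def intro!: exI[of _ "\<lambda>_. 1"])
    then show ?thesis
      using square by (intro exI[of _ l] exI[of _ "Suc l"]) auto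
  next
    case three_units
    then obtain u1 u2 u3 where u: "u1 < u2" "u2 < u3" "{u1, u2, u3} \<subseteq> U"
      "\<forall>l\<in>U. l \<le> u3 \<longrightarrow> l \<in> {u1, u2, u3}"
      using three_smallest_elements[of U] by (auto simp: U_def)
    then obtain i j where ij: "u1 \<le> i" "i < j" "j \<le> Suc u3" "\<not> p dvd y i"
      and mod_p: "unit_square_zero_sum p p y {i..<j}"
      using unit_square_zero_sum_three_units[OF p, of u1 u2 u3 y] by (auto simp: U_def)
    have "unit_square_zero_sum p (p^2) y {i..<j}"
      using unit_square_zero_sum_lift[OF p _ _ ij(4) mod_p] ij(2) by simp
    moreover have "j \<le> 9"
      using u ij(3) by (auto simp: U_def)
    ultimately show ?thesis
      using ij(2) by blast
  next
    case few_units
    then obtain i where i: "i \<in> {0, 3, 6}" "p dvd y i" "p dvd y (i + 1)" "p dvd y (i + 2)"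
      using three_blocks_of_three[of "\<lambda>l. p dvd y l"] unfolding U_def by blast
    text \<open>Here the whole block is divisible by \<open>p\<close>: apply the argument modulo \<open>p\<close> to \<open>y / p\<close>.\<close>
    define z where "z l = y l div p" for l
    have "p dvd y l" "\<not> p^2 dvd y l" if "l \<in> {i..<i + 3}" for l
      using that few_units(1) i by (auto simp: numeral_3_eq_3 atLeastLessThanSuc)
    then have y_eq: "\<forall>l\<in>{i..<i + 3}. y l = p * z l" and z_units: "\<forall>l\<in>{i..<i + 3}. \<not> p dvd z l"
      by (auto simp: z_def power2_eq_square) (metis dvd_mult_div_cancel mult_dvd_mono dvd_refl)
    have "\<exists>i' j. i \<le> i' \<and> i' < j \<and> j \<le> Suc (i + 2) \<and> \<not> p dvd z i'
        \<and> unit_square_zero_sum p p z {i'..<j}"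
      by (rule unit_square_zero_sum_three_units[OF p]) (use z_units in auto)
    then obtain i' j where ij: "i \<le> i'" "i' < j" "j \<le> i + 3" "unit_square_zero_sum p p z {i'..<j}"
      by auto
    then have "unit_square_zero_sum p (p * p) y {i'..<j}"
      using y_eq by (intro unit_square_zero_sum_scale) auto
    then show ?thesis
      using ij i by (intro exI[of _ i'] exI[of _ j]) (auto simp: power2_eq_square)
  qed
qed

lemma square_mod_in_S_star:
  fixes p x :: int
  assumes p: "prime p" and n: "int n = (int k * p)^2" "k > 0" and x: "\<not> p dvd x"
  shows "nat ((int k * x)^2 mod int n) \<in> S_star n"
proof -
  have "p \<noteq> 0"
    using p by auto
  then have "int n > 0"
    using n by simp
  then have n_pos: "n > 0"
    by simp
  define w where "w = nat \<bar>int k * x\<bar> mod n"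
  have "int ((nat \<bar>int k * x\<bar>)^2) = (int k * x)^2"
    by simp
  then have int_w: "int (w^2 mod n) = (int k * x)^2 mod int n"
    by (metis w_def of_nat_mod power_mod)
  have "(int k * x)^2 mod int n \<noteq> 0"
  proof
    assume "(int k * x)^2 mod int n = 0"
    then have "(int k * p)^2 dvd (int k * x)^2"
      by (metis n(1) dvd_eq_mod_eq_0)
    then show False
      using x n(2) by simp
  qed
  then have "w^2 mod n \<noteq> 0"
    using int_w by simp
  moreover have "w < n"
    using n_pos by (simp add: w_def)
  moreover have "nat ((int k * x)^2 mod int n) = w^2 mod n"
    by (simp flip: int_w)
  ultimately show ?thesis
    unfolding S_star_def by auto
qed

lemma weighted_zero_sum_of_unit_square_zero_sum:
  fixes p :: int and ys :: "nat list"
  assumes p: "prime p" and n: "int n = (int k * p)^2" "k > 0"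
    and ij: "i < j" "j \<le> length ys"
    and sum: "unit_square_zero_sum p (p^2) (\<lambda>l. int (ys ! l)) {i..<j}"
  shows "weighted_zero_sum n (S_star n) (drop i (take j ys))"
proof -
  obtain x where x: "\<forall>l\<in>{i..<j}. \<not> p dvd x l"
    and dvd: "p^2 dvd (\<Sum>l\<in>{i..<j}. (x l)^2 * int (ys ! l))"
    using sum unfolding unit_square_zero_sum_def by blast
  have "p \<noteq> 0"
    using p by auto
  then have n_pos: "int n > 0"
    using n by simp
  define a where "a l = nat ((int k * x (i + l))^2 mod int n)" for l
  define block where "block = drop i (take j ys)"
  have block: "length block = j - i" "\<And>l. l < j - i \<Longrightarrow> block ! l = ys ! (i + l)"
    using ij by (simp_all add: block_def)
  have "\<forall>l<length block. a l \<in> S_star n"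
    using x block(1) by (auto simp: a_def intro!: square_mod_in_S_star[OF p n])
  moreover have "n dvd (\<Sum>l<length block. a l * block ! l)"
  proof -
    have "[int (\<Sum>l<length block. a l * block ! l)
        = (\<Sum>l<j - i. (int k)^2 * ((x (i + l))^2 * int (ys ! (i + l))))] (mod int n)"
      unfolding block(1) of_nat_sum of_nat_mult
    proof (rule cong_sum)
      fix l assume "l \<in> {..<j - i}"
      have "[int (a l) = (int k * x (i + l))^2] (mod int n)"
        using n_pos by (simp add: a_def cong_def)
      then have "[int (a l) * int (ys ! (i + l)) = (int k * x (i + l))^2 * int (ys ! (i + l))] (mod int n)"
        by (rule cong_mult[OF _ cong_refl])
      then show "[int (a l) * int (block ! l) = (int k)^2 * ((x (i + l))^2 * int (ys ! (i + l)))] (mod int n)"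
        using \<open>l \<in> {..<j - i}\<close> by (simp add: block(2) power_mult_distrib ac_simps)
    qed
    moreover have "(\<Sum>l<j - i. (int k)^2 * ((x (i + l))^2 * int (ys ! (i + l))))
        = (int k)^2 * (\<Sum>l\<in>{i..<j}. (x l)^2 * int (ys ! l))"
      using ij(1) by (simp add: sum_distrib_left sum.atLeastLessThan_shift_0[of _ i j] atLeast0LessThan)
    moreover have "int n dvd (int k)^2 * (\<Sum>l\<in>{i..<j}. (x l)^2 * int (ys ! l))"
      using dvd by (simp add: n power_mult_distrib)
    ultimately show ?thesis
      by (metis cong_dvd_iff of_nat_dvd_iff)
  qed
  moreover have "block \<noteq> []"
    using block(1) ij(1) by auto
  ultimately show ?thesis
    unfolding weighted_zero_sum_def block_def[symmetric] by (blast dest: dvd_imp_mod_0)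
qed

theorem mainTheorem17:
  fixes n :: nat
  assumes "n > 1" and "odd n" and "\<exists>m. n = m ^ 2"
  shows "consec_property n (S_star n) 9 \<and> C_A n (S_star n) \<le> 9"
proof -
  obtain m where m: "n = m^2"
    using assms(3) by blast
  then obtain q where q: "prime q" "q dvd m"
    using assms(1) prime_factor_nat[of m] by fastforce
  then obtain k where k: "m = q * k"
    by blast
  have "odd q"
    using assms(2) m q(2) by auto
  then have p: "prime (int q)" "int q > 2"
    using q(1) prime_ge_2_nat[of q] by (auto simp: le_less)
  have "k \<noteq> 0"
    using m k assms(1) by (cases k) auto
  then have n: "int n = (int k * int q)^2" "k > 0"
    using m k by (simp_all add: power_mult_distrib)
  have "consec_property n (S_star n) 9"
    unfolding consec_property_def
  proof (intro allI impI)
    fix ys :: "nat list" assume ys: "length ys = 9 \<and> set ys \<subseteq> {0..<n}"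
    obtain i j where ij: "i < j" "j \<le> 9"
      and "unit_square_zero_sum (int q) (int q ^ 2) (\<lambda>l. int (ys ! l)) {i..<j}"
      using unit_square_zero_sum_among_nine[OF p] by blast
    then have "weighted_zero_sum n (S_star n) (drop i (take j ys))"
      using ys by (intro weighted_zero_sum_of_unit_square_zero_sum[OF p(1) n]) auto
    then show "\<exists>i j. i < j \<and> j \<le> 9 \<and> weighted_zero_sum n (S_star n) (drop i (take j ys))"
      using ij by blast
  qed
  moreover have "C_A n (S_star n) \<le> 9"
    unfolding C_A_def by (rule Least_le) (use calculation in simp)
  ultimately show ?thesis
    by blast
qed

end
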